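(* Let $\mathbb{A}$ be an alphabet, let $WW'$ be an almost-square over $\mathbb{A}$ (with $W'$ either an extension of $W$ or obtained from $W$ by deleting one letter), and let $V$ be a word over $\mathbb{A}$ such that $WW'V=XX'$ where $XX'$ is an almost-square (with $X'$ either an extension of $X$ or obtained from $X$ by deleting one letter). If $4\leq |V|\leq \frac{1}{2}|W|$, then $XX'$ is not square-free.
   Context: Words are finite sequences of letters; $|U|$ denotes the length of $U$. An extension of a word $W$ over $\mathbb{A}$ is a word $W_1xW_2$ with $W=W_1W_2$ ($W_1,W_2$ possibly empty) and $x\in\mathbb{A}$. An almost-square is a word of the form $WW'$ where $W'$ is either an extension of $W$ or is obtained by deleting one letter from $W$. A square is a nonempty word of the form $YY$; a word is square-free if none of its factors (contiguous subwords) is a square. *)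

theory Defs
  imports Main
begin

definition is_extension :: "'a list \<Rightarrow> 'a list \<Rightarrow> bool" where
  "is_extension W' W \<longleftrightarrow> (\<exists>W1 W2 x. W = W1 @ W2 \<and> W' = W1 @ [x] @ W2)"

definition is_deletion :: "'a list \<Rightarrow> 'a list \<Rightarrow> bool" where
  "is_deletion W' W \<longleftrightarrow> (\<exists>W1 W2 x. W = W1 @ [x] @ W2 \<and> W' = W1 @ W2)"

definition almost_square_pair :: "'a list \<Rightarrow> 'a list \<Rightarrow> bool" where
  "almost_square_pair W W' \<longleftrightarrow> is_extension W' W \<or> is_deletion W' W"

definition is_factor :: "'a list \<Rightarrow> 'a list \<Rightarrow> bool" where
  "is_factor U S \<longleftrightarrow> (\<exists>P Q. S = P @ U @ Q)"

definition square_free :: "'a list \<Rightarrow> bool" where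
  "square_free S \<longleftrightarrow> \<not> (\<exists>Y. Y \<noteq> [] \<and> is_factor (Y @ Y) S)"

end

theory Submission
  imports Defs
begin

text \<open>An almost-square decomposition \<open>W W'\<close> of a prefix of \<open>S\<close> says that \<open>S\<close> agrees with its
  shift by \<open>|W|\<close> before the edited position \<open>k\<close> and with its shift by \<open>|W'|\<close> after it.
  For \<open>S = W W' V = X X'\<close> the positions \<open>k\<close> and \<open>k'\<close> of the two decompositions cut
  \<open>[0, |W|)\<close> into at most three runs, on each of which two different shifts hold at once, so
  their difference is a period there; square-freeness makes every run shorter than this
  difference. As \<open>|X| + |X'| = |W| + |W'| + |V|\<close>, the differences add up to about
  \<open>3|V|/2\<close>, whence \<open>2|W| \<le> 3|V|\<close>, contradicting \<open>2|V| \<le> |W|\<close>.\<close>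

definition has_period_on :: "'a list \<Rightarrow> nat \<Rightarrow> nat set \<Rightarrow> bool" where
  "has_period_on S p I \<longleftrightarrow> (\<forall>i\<in>I. S ! i = S ! (i + p))"

lemma has_period_on_subset:
  "has_period_on S p J \<Longrightarrow> I \<subseteq> J \<Longrightarrow> has_period_on S p I"
  unfolding has_period_on_def by blast

lemma not_square_free_if_period:
  fixes S :: "'a list"
  assumes "0 < p" and "s + 2 * p \<le> length S" and period: "has_period_on S p {s..<s + p}"
  shows "\<not> square_free S"
proof -
  define Y where "Y = take p (drop s S)"
  have "Y @ Y = take (2 * p) (drop s S)"
  proof (rule nth_equalityI)
    fix j assume "j < length (Y @ Y)"
    then have j: "j < 2 * p" using assms(2) by (simp add: Y_def)
    show "(Y @ Y) ! j = take (2 * p) (drop s S) ! j"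
    proof (cases "j < p")
      case False
      then have "s + (j - p) \<in> {s..<s + p}" using j by auto
      then have "S ! (s + (j - p)) = S ! (s + j)"
        using period False unfolding has_period_on_def by force
      then show ?thesis using False j assms(2) by (simp add: Y_def nth_append)
    qed (use j assms(2) in \<open>simp add: Y_def nth_append\<close>)
  qed (use assms(2) in \<open>simp add: Y_def\<close>)
  then have "S = take s S @ (Y @ Y) @ drop (2 * p) (drop s S)"
    by (simp only: append_take_drop_id)
  moreover have "Y \<noteq> []" using assms(1,2) by (simp add: Y_def)
  ultimately show ?thesis unfolding square_free_def is_factor_def by blast
qed

lemma square_free_run_shorter_than_period_gap:
  fixes S :: "'a list"
  assumes "square_free S"
    and "has_period_on S p {lo..<hi}" and "has_period_on S q {lo..<hi}"
    and "p < q" and "hi + q \<le> length S"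
  shows "hi + p < lo + q"
proof (rule ccontr)
  assume long: "\<not> hi + p < lo + q"
  have "has_period_on S (q - p) {lo + p..<lo + p + (q - p)}"
    unfolding has_period_on_def
  proof
    fix i assume "i \<in> {lo + p..<lo + p + (q - p)}"
    then have "i - p \<in> {lo..<hi}" "i = i - p + p" "i + (q - p) = i - p + q"
      using long \<open>p < q\<close> by auto
    then show "S ! i = S ! (i + (q - p))"
      using assms(2,3) unfolding has_period_on_def by metis
  qed
  then have "\<not> square_free S"
    by (rule not_square_free_if_period[rotated 2]) (use assms(4,5) long in auto)
  with assms(1) show False by contradiction
qed

lemma almost_square_pair_length:
  "almost_square_pair W W' \<Longrightarrow> length W' = length W + 1 \<or> length W' + 1 = length W"
  unfolding almost_square_pair_def is_extension_def is_deletion_def by auto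

lemma almost_square_pair_periods:
  assumes "almost_square_pair W W'" and S: "S = W @ W' @ R"
  obtains k where "k \<le> length W"
    and "has_period_on S (length W) {..<k}"
    and "has_period_on S (length W') {k<..<length W}"
  using assms(1) unfolding almost_square_pair_def
proof
  assume "is_extension W' W"
  then obtain W1 W2 x where W: "W = W1 @ W2" and W': "W' = W1 @ [x] @ W2"
    unfolding is_extension_def by blast
  have "has_period_on S (length W') {length W1<..<length W}"
    unfolding has_period_on_def
  proof
    fix i assume "i \<in> {length W1<..<length W}"
    then have i: "length W1 < i" "i < length W" using W by auto
    have "i + length W' = length W + (i + 1)" using W W' by simp
    then have "S ! (i + length W') = (W' @ R) ! (i + 1)"
      unfolding S by (simp only: nth_append_length_plus)
    also have "\<dots> = W' ! (i + 1)"
      by (rule nth_append_left) (use i W W' in simp)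
    also have "\<dots> = W ! i"
      using i W W' by (simp add: nth_append nth_Cons')
    also have "\<dots> = S ! i"
      using i S by (simp add: nth_append)
    finally show "S ! i = S ! (i + length W')" by simp
  qed
  then show thesis
    using that[of "length W1"] S W W' by (simp add: has_period_on_def nth_append)
next
  assume "is_deletion W' W"
  then obtain W1 W2 x where W: "W = W1 @ [x] @ W2" and W': "W' = W1 @ W2"
    unfolding is_deletion_def by blast
  have "has_period_on S (length W') {length W1<..<length W}"
    unfolding has_period_on_def
  proof
    fix i assume "i \<in> {length W1<..<length W}"
    then have i: "length W1 < i" "i < length W" using W by auto
    have "i + length W' = length W + (i - 1)" using i W W' by simp
    then have "S ! (i + length W') = (W' @ R) ! (i - 1)"
      unfolding S by (simp only: nth_append_length_plus)
    also have "\<dots> = W' ! (i - 1)"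
      by (rule nth_append_left) (use i W W' in simp)
    also have "\<dots> = W2 ! (i - 1 - length W1)"
      using i W' by (simp add: nth_append_right)
    also have "\<dots> = W ! i"
      using i W by (simp add: nth_append_right)
    also have "\<dots> = S ! i"
      using i S by (simp add: nth_append)
    finally show "S ! i = S ! (i + length W')" by simp
  qed
  then show thesis
    using that[of "length W1"] S W W' by (simp add: has_period_on_def nth_append)
qed

lemma square_free_almost_square_periods_bound:
  fixes S :: "'a list"
  assumes sf: "square_free S"
    and len: "length S = n + n' + v" "length S = m + m'"
    and n': "n' = n + 1 \<or> n' + 1 = n" and m': "m' = m + 1 \<or> m' + 1 = m"
    and "4 \<le> v" and k: "k \<le> n"
    and W: "has_period_on S n {..<k}" "has_period_on S n' {k<..<n}"
    and X: "has_period_on S m {..<k'}" "has_period_on S m' {k'<..<m}"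
  shows "2 * n \<le> 3 * v"
proof -
  have lt: "n < m" "n' < m" "n < m'" "n' < m'"
    using len n' m' \<open>4 \<le> v\<close> by linarith+
  \<comment> \<open>The four runs cover \<open>[0, n)\<close> except the positions \<open>k\<close> and \<open>k'\<close>.\<close>
  have "min k k' + n < 0 + m"
    by (rule square_free_run_shorter_than_period_gap[OF sf has_period_on_subset[OF W(1)]
          has_period_on_subset[OF X(1)]]) (use lt len k in auto)
  moreover have "min k' n + n' < Suc k + m"
    by (rule square_free_run_shorter_than_period_gap[OF sf has_period_on_subset[OF W(2)]
          has_period_on_subset[OF X(1)]]) (use lt len k in auto)
  moreover have "k + n < Suc k' + m'"
    by (rule square_free_run_shorter_than_period_gap[OF sf has_period_on_subset[OF W(1)]
          has_period_on_subset[OF X(2)]]) (use lt len k in auto)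
  moreover have "n + n' < Suc (max k k') + m'"
    by (rule square_free_run_shorter_than_period_gap[OF sf has_period_on_subset[OF W(2)]
          has_period_on_subset[OF X(2)]]) (use lt len k in auto)
  ultimately show ?thesis
    using len n' m' k by linarith
qed

theorem mainTheorem5:
  fixes W W' V X X' :: "'a list"
  assumes "almost_square_pair W W'"
    and "almost_square_pair X X'"
    and "W @ W' @ V = X @ X'"
    and "4 \<le> length V"
    and "2 * length V \<le> length W"
  shows "\<not> square_free (X @ X')"
proof
  assume sf: "square_free (X @ X')"
  have len: "length (X @ X') = length W + length W' + length V"
    by (simp flip: assms(3))
  obtain k where "k \<le> length W"
    and "has_period_on (X @ X') (length W) {..<k}"
    and "has_period_on (X @ X') (length W') {k<..<length W}"
    using almost_square_pair_periods[OF assms(1) assms(3)[symmetric]] .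
  moreover obtain k' where "has_period_on (X @ X') (length X) {..<k'}"
    and "has_period_on (X @ X') (length X') {k'<..<length X}"
    using almost_square_pair_periods[OF assms(2)
        append_Nil2[of "X @ X'", symmetric, unfolded append_assoc]] .
  ultimately have "2 * length W \<le> 3 * length V"
    by (intro square_free_almost_square_periods_bound[OF sf len length_append
          almost_square_pair_length[OF assms(1)] almost_square_pair_length[OF assms(2)]
          assms(4)])
  with assms(4,5) show False by linarith
qed

end
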